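(* Let $L$ be a matroid on a finite set $S\cup T$ with $S\cap T=\emptyset$. Then $L = L|S\mathbin{\Box} L/S$ (where $L|S$ is the restriction of $L$ to $S$ and $L/S$ is the contraction of $S$, a matroid on $T$) if and only if $S$ is a free separator of $L$.
   Context: For a matroid $M$ on a finite set $S$ write $\rho_M$ for its rank function, $\rho(M)=\rho_M(S)$, $\nu_M(A)=|A|-\rho_M(A)$ and $\lambda_M(A)=\rho(M)-\rho_M(A)$. For matroids $M$ on $S$ and $N$ on $T$ with $S\cap T=\emptyset$, the free product $M\mathbin{\Box} N$ is the matroid on $S\cup T$ whose independent sets are those $A\subseteq S\cup T$ such that $A\cap S$ is independent in $M$ and $\lambda_M(A\cap S)\geq \nu_N(A\cap T)$. A cyclic flat of a matroid is a flat that is a union of circuits. A subset $A$ of the ground set of a matroid $M$ is a free separator of $M$ if every cyclic flat of $M$ is comparable to $A$ by inclusion. *)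

theory Defs
  imports Main
begin

definition matroid :: "'a set \<Rightarrow> ('a set \<Rightarrow> bool) \<Rightarrow> bool" where
  "matroid E I \<longleftrightarrow> finite E \<and> (\<forall>X. I X \<longrightarrow> X \<subseteq> E) \<and> I {} \<and>
     (\<forall>X Y. I X \<and> Y \<subseteq> X \<longrightarrow> I Y) \<and>
     (\<forall>X Y. I X \<and> I Y \<and> card X < card Y \<longrightarrow> (\<exists>y\<in>Y - X. I (insert y X)))"

definition rk :: "('a set \<Rightarrow> bool) \<Rightarrow> 'a set \<Rightarrow> nat" where
  "rk I A = Max (card ` {X. X \<subseteq> A \<and> I X})"

definition restr :: "('a set \<Rightarrow> bool) \<Rightarrow> 'a set \<Rightarrow> 'a set \<Rightarrow> bool" where
  "restr I S X \<longleftrightarrow> I X \<and> X \<subseteq> S"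

definition contr :: "('a set \<Rightarrow> bool) \<Rightarrow> 'a set \<Rightarrow> 'a set \<Rightarrow> 'a set \<Rightarrow> bool" where
  "contr I S T X \<longleftrightarrow> X \<subseteq> T \<and> rk I (X \<union> S) = card X + rk I S"

text \<open>Free product of M (on S) and N (on T):
  A independent iff A \<inter> S independent in M and
  lambda_M(A \<inter> S) \<ge> nu_N(A \<inter> T).\<close>
definition free_product ::
  "'a set \<Rightarrow> ('a set \<Rightarrow> bool) \<Rightarrow> 'a set \<Rightarrow> ('a set \<Rightarrow> bool) \<Rightarrow> 'a set \<Rightarrow> bool" where
  "free_product S M T N A \<longleftrightarrow> A \<subseteq> S \<union> T \<and> M (A \<inter> S) \<and>
     int (rk M S) - int (rk M (A \<inter> S)) \<ge> int (card (A \<inter> T)) - int (rk N (A \<inter> T))"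

definition circuit :: "'a set \<Rightarrow> ('a set \<Rightarrow> bool) \<Rightarrow> 'a set \<Rightarrow> bool" where
  "circuit E I C \<longleftrightarrow> C \<subseteq> E \<and> \<not> I C \<and> (\<forall>D. D \<subset> C \<longrightarrow> I D)"

definition flat :: "'a set \<Rightarrow> ('a set \<Rightarrow> bool) \<Rightarrow> 'a set \<Rightarrow> bool" where
  "flat E I F \<longleftrightarrow> F \<subseteq> E \<and> (\<forall>x\<in>E - F. rk I (insert x F) > rk I F)"

definition cyclic_flat :: "'a set \<Rightarrow> ('a set \<Rightarrow> bool) \<Rightarrow> 'a set \<Rightarrow> bool" where
  "cyclic_flat E I F \<longleftrightarrow> flat E I F \<and> F = \<Union>{C. circuit E I C \<and> C \<subseteq> F}"

definition free_separator :: "'a set \<Rightarrow> ('a set \<Rightarrow> bool) \<Rightarrow> 'a set \<Rightarrow> bool" where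
  "free_separator E I A \<longleftrightarrow> A \<subseteq> E \<and> (\<forall>F. cyclic_flat E I F \<longrightarrow> F \<subseteq> A \<or> A \<subseteq> F)"

end

theory Submission
  imports Defs
begin

text \<open>A set X is independent in L|S \<box> L/S iff X \<inter> S is independent in L and
  card X \<le> rk (S \<union> (X \<inter> T)); every independent set of L passes this test. If a circuit C
  not contained in S misses some s \<in> S from its closure, then
  card C = rk C + 1 \<le> rk (insert s C) \<le> rk (S \<union> (C \<inter> T)), so C is independent in the
  product. If instead every such circuit spans S, a dependent X contains one, C, and
  rk (S \<union> (X \<inter> T)) \<le> rk C + card (X \<inter> T - C) < card X. Hence the equation holds iff every
  circuit not contained in S spans S, and this is the free separator condition: the closure
  of a circuit is a cyclic flat, and a cyclic flat not contained in S contains a circuit not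
  contained in S.\<close>

lemma rk_eqI:
  assumes "\<And>X. X \<subseteq> A \<Longrightarrow> J X \<Longrightarrow> card X \<le> n" and "X0 \<subseteq> A" "J X0" "card X0 = n"
  shows "rk J A = n"
proof -
  have fin: "finite (card ` {X. X \<subseteq> A \<and> J X})"
    by (rule finite_subset[of _ "{..n}"]) (use assms(1) in auto)
  have "Max (card ` {X. X \<subseteq> A \<and> J X}) \<le> n"
    using fin assms by (subst Max_le_iff) auto
  moreover have "n \<le> Max (card ` {X. X \<subseteq> A \<and> J X})"
    using fin assms(2-4) by (intro Max_ge) auto
  ultimately show ?thesis unfolding rk_def by simp
qed

locale finite_matroid =
  fixes E :: "'a set" and I :: "'a set \<Rightarrow> bool"
  assumes matroid: "matroid E I"
begin

lemma finite_ground: "finite E"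
  using matroid unfolding matroid_def by blast

lemma indep_subset_ground: "I X \<Longrightarrow> X \<subseteq> E"
  using matroid unfolding matroid_def by blast

lemma indep_empty: "I {}"
  using matroid unfolding matroid_def by blast

lemma indep_subset: "I X \<Longrightarrow> Y \<subseteq> X \<Longrightarrow> I Y"
  using matroid unfolding matroid_def by blast

lemma indep_augment: "I X \<Longrightarrow> I Y \<Longrightarrow> card X < card Y \<Longrightarrow> \<exists>y\<in>Y - X. I (insert y X)"
  using matroid unfolding matroid_def by blast

lemma indep_finite: "I X \<Longrightarrow> finite X"
  using indep_subset_ground finite_ground finite_subset by blast

lemma card_insert_indep: "I X \<Longrightarrow> x \<notin> X \<Longrightarrow> card (insert x X) = card X + 1"
  using indep_finite by simp

subsection \<open>Rank\<close>

lemma finite_card_indep_subsets: "finite (card ` {X. X \<subseteq> A \<and> I X})"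
proof -
  have "{X. X \<subseteq> A \<and> I X} \<subseteq> Pow E"
    using indep_subset_ground by blast
  then show ?thesis
    using finite_ground by (meson finite_Pow_iff finite_imageI finite_subset)
qed

lemma card_le_rk: "X \<subseteq> A \<Longrightarrow> I X \<Longrightarrow> card X \<le> rk I A"
  unfolding rk_def using finite_card_indep_subsets by (intro Max_ge) auto

lemma obtain_basis:
  obtains B where "B \<subseteq> A" "I B" "card B = rk I A"
proof -
  have "rk I A \<in> card ` {X. X \<subseteq> A \<and> I X}"
    unfolding rk_def using finite_card_indep_subsets indep_empty by (intro Max_in) auto
  then show ?thesis using that by auto
qed

lemma rk_mono: "A \<subseteq> B \<Longrightarrow> rk I A \<le> rk I B"
  by (metis card_le_rk obtain_basis order_trans)

lemma rk_le_card: "finite A \<Longrightarrow> rk I A \<le> card A"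
  by (metis card_mono obtain_basis)

lemma rk_indep: "I A \<Longrightarrow> rk I A = card A"
  using card_le_rk[of A A] rk_le_card indep_finite by force

lemma indep_if_rk_eq_card: "finite A \<Longrightarrow> rk I A = card A \<Longrightarrow> I A"
  by (metis card_subset_eq obtain_basis)

lemma indep_extend_to_basis:
  "I J \<Longrightarrow> J \<subseteq> A \<Longrightarrow> \<exists>K. J \<subseteq> K \<and> K \<subseteq> A \<and> I K \<and> card K = rk I A"
proof (induction "rk I A - card J" arbitrary: J rule: less_induct)
  case less
  show ?case
  proof (cases "card J < rk I A")
    case False
    then have "card J = rk I A" using card_le_rk[OF less.prems(2,1)] by simp
    then show ?thesis using less.prems by blast
  next
    case True
    obtain B where B: "B \<subseteq> A" "I B" "card B = rk I A" by (rule obtain_basis)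
    with True have "card J < card B" by simp
    then obtain y where y: "y \<in> B - J" "I (insert y J)"
      using indep_augment[OF less.prems(1) B(2)] by blast
    then have "rk I A - card (insert y J) < rk I A - card J"
      using True card_insert_indep[OF less.prems(1)] by simp
    moreover have "insert y J \<subseteq> A" using y B less.prems by blast
    ultimately obtain K where "insert y J \<subseteq> K" "K \<subseteq> A" "I K" "card K = rk I A"
      using less.hyps[OF _ y(2)] by meson
    then show ?thesis by blast
  qed
qed

lemma basis_augment:
  assumes "K \<subseteq> A" "I K" "card K = rk I A" and "A \<subseteq> A'" "rk I A < rk I A'"
  shows "\<exists>y\<in>A' - A. I (insert y K)"
proof -
  obtain B where B: "B \<subseteq> A'" "I B" "card B = rk I A'" by (rule obtain_basis)
  obtain y where y: "y \<in> B - K" "I (insert y K)"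
    using indep_augment[OF assms(2) B(2)] assms B by auto
  have "y \<notin> A"
  proof
    assume "y \<in> A"
    then have "card (insert y K) \<le> rk I A" using card_le_rk y assms by auto
    then show False using assms y card_insert_indep[OF assms(2)] by simp
  qed
  then show ?thesis using y B by auto
qed

lemma rk_Un_le: "finite Z \<Longrightarrow> rk I (A \<union> Z) \<le> rk I A + card Z"
proof -
  assume "finite Z"
  obtain K where K: "K \<subseteq> A \<union> Z" "I K" "card K = rk I (A \<union> Z)" by (rule obtain_basis)
  have "card (K \<inter> A) \<le> rk I A" using K indep_subset by (intro card_le_rk) auto
  moreover have "card (K - A) \<le> card Z" using K \<open>finite Z\<close> by (intro card_mono) auto
  moreover have "card K = card (K \<inter> A) + card (K - A)"
    using indep_finite[OF K(2)] by (metis Int_Diff_disjoint Int_Diff_Un card_Un_disjoint finite_Diff finite_Int)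
  ultimately show ?thesis using K by linarith
qed

subsection \<open>Closure\<close>

definition cl :: "'a set \<Rightarrow> 'a set" where
  "cl A = {x \<in> E. rk I (insert x A) = rk I A}"

lemma subset_cl: "A \<subseteq> E \<Longrightarrow> A \<subseteq> cl A"
  unfolding cl_def by (auto simp: insert_absorb)

lemma rk_less_if_notin_cl: "x \<in> E \<Longrightarrow> x \<notin> cl A \<Longrightarrow> rk I A < rk I (insert x A)"
  unfolding cl_def using rk_mono[of A "insert x A"] by force

lemma rk_Un_cl:
  assumes "Z \<subseteq> cl A"
  shows "rk I (A \<union> Z) = rk I A"
proof (rule ccontr)
  assume "rk I (A \<union> Z) \<noteq> rk I A"
  then have less: "rk I A < rk I (A \<union> Z)" using rk_mono[of A "A \<union> Z"] by auto
  obtain K where K: "K \<subseteq> A" "I K" "card K = rk I A" by (rule obtain_basis)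
  obtain y where y: "y \<in> Z" "y \<notin> A" "I (insert y K)"
    using basis_augment[OF K _ less] by blast
  have "card (insert y K) \<le> rk I (insert y A)"
    using K y by (intro card_le_rk) auto
  moreover have "card (insert y K) = card K + 1"
    using y K card_insert_indep by blast
  ultimately show False using assms y K unfolding cl_def by auto
qed

lemma cl_mono:
  assumes "A \<subseteq> B"
  shows "cl A \<subseteq> cl B"
proof
  fix x assume x: "x \<in> cl A"
  show "x \<in> cl B"
  proof (rule ccontr)
    assume "x \<notin> cl B"
    moreover have "x \<in> E" using x unfolding cl_def by blast
    ultimately have less: "rk I B < rk I (insert x B)" by (rule rk_less_if_notin_cl[rotated])
    obtain J where J: "J \<subseteq> A" "I J" "card J = rk I A" by (rule obtain_basis)
    have JB: "J \<subseteq> B" using J(1) assms by blast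
    obtain K where K: "J \<subseteq> K" "K \<subseteq> B" "I K" "card K = rk I B"
      using indep_extend_to_basis[OF J(2) JB] by blast
    have "\<exists>y\<in>insert x B - B. I (insert y K)"
      by (rule basis_augment[OF K(2-4) _ less]) blast
    then have "I (insert x K)" "x \<notin> B" by auto
    then have "I (insert x J)" "x \<notin> J"
      using K(1) J(1) assms indep_subset[of "insert x K" "insert x J"] by blast+
    then have "card J + 1 \<le> rk I (insert x A)"
      using J(1) card_le_rk[of "insert x J" "insert x A"] card_insert_indep[OF J(2)] by auto
    then show False using x J(3) unfolding cl_def by simp
  qed
qed

lemma cl_subset_flat:
  assumes "flat E I F" "A \<subseteq> F"
  shows "cl A \<subseteq> F"
proof -
  have "cl F \<subseteq> F"
    using assms(1) unfolding flat_def cl_def by force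
  then show ?thesis using cl_mono[OF assms(2)] by blast
qed

subsection \<open>Circuits and cyclic flats\<close>

lemma dependent_contains_circuit: "X \<subseteq> E \<Longrightarrow> \<not> I X \<Longrightarrow> \<exists>C. C \<subseteq> X \<and> circuit E I C"
proof (induction "card X" arbitrary: X rule: less_induct)
  case less
  show ?case
  proof (cases "\<forall>D. D \<subset> X \<longrightarrow> I D")
    case True
    then show ?thesis using less.prems unfolding circuit_def by blast
  next
    case False
    then obtain D where D: "D \<subset> X" "\<not> I D" by blast
    then have "card D < card X"
      using finite_ground less.prems by (meson psubset_card_mono finite_subset)
    moreover have "D \<subseteq> E" using D(1) less.prems(1) by blast
    ultimately obtain C where "C \<subseteq> D" "circuit E I C"
      using less.hyps[OF _ _ D(2)] by meson
    then show ?thesis using D(1) by blast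
  qed
qed

lemma rk_circuit:
  assumes "circuit E I C"
  shows "rk I C + 1 = card C"
proof -
  have C: "C \<subseteq> E" "\<not> I C" "\<forall>D. D \<subset> C \<longrightarrow> I D"
    using assms unfolding circuit_def by auto
  then have "finite C" using finite_ground finite_subset by blast
  have "C \<noteq> {}" using C(2) indep_empty by auto
  then obtain c where c: "c \<in> C" by blast
  then have "card (C - {c}) \<le> rk I C" using C(3) by (intro card_le_rk) auto
  moreover have "rk I C < card C"
    using rk_le_card indep_if_rk_eq_card \<open>finite C\<close> C(2) le_neq_implies_less by blast
  ultimately show ?thesis using c \<open>finite C\<close> by (simp add: card_Diff_singleton)
qed

lemma ex_circuit_through_mem_cl:
  assumes C: "circuit E I C" and x: "x \<in> cl C"
  shows "\<exists>D. circuit E I D \<and> D \<subseteq> cl C \<and> x \<in> D"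
proof -
  have C_cl: "C \<subseteq> cl C" using C subset_cl unfolding circuit_def by blast
  show ?thesis
  proof (cases "x \<in> C")
    case True
    then show ?thesis using C C_cl by blast
  next
    case False
    obtain B where B: "B \<subseteq> C" "I B" "card B = rk I C" by (rule obtain_basis)
    have x_B: "x \<notin> B" using B(1) False by blast
    have dep: "\<not> I (insert x B)"
    proof
      assume "I (insert x B)"
      then have "card (insert x B) \<le> rk I (insert x C)" using B by (intro card_le_rk) auto
      then show False using x B card_insert_indep[OF B(2) x_B] unfolding cl_def by simp
    qed
    have "insert x B \<subseteq> E" using x B C unfolding cl_def circuit_def by auto
    then obtain D where D: "D \<subseteq> insert x B" "circuit E I D"
      using dependent_contains_circuit[OF _ dep] by blast
    have "x \<in> D"
    proof (rule ccontr)
      assume "x \<notin> D"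
      then have "I D" using D(1) B(2) indep_subset by blast
      then show False using D(2) unfolding circuit_def by blast
    qed
    moreover have "D \<subseteq> cl C" using D(1) B(1) x C_cl by blast
    ultimately show ?thesis using D(2) by blast
  qed
qed

lemma cyclic_flat_cl_circuit:
  assumes C: "circuit E I C"
  shows "cyclic_flat E I (cl C)"
proof -
  have C_cl: "C \<subseteq> cl C" using C subset_cl unfolding circuit_def by blast
  have rk_cl: "rk I (cl C) = rk I C"
    using rk_Un_cl[of "cl C" C] C_cl by (simp add: Un_absorb1)
  have "flat E I (cl C)"
    unfolding flat_def
  proof (intro conjI ballI)
    show "cl C \<subseteq> E" unfolding cl_def by blast
    fix x assume "x \<in> E - cl C"
    then have "rk I C < rk I (insert x C)" by (intro rk_less_if_notin_cl) auto
    also have "\<dots> \<le> rk I (insert x (cl C))" using C_cl by (intro rk_mono) blast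
    finally show "rk I (cl C) < rk I (insert x (cl C))" using rk_cl by simp
  qed
  moreover have "cl C \<subseteq> \<Union>{D. circuit E I D \<and> D \<subseteq> cl C}"
  proof
    fix x assume "x \<in> cl C"
    then obtain D where "circuit E I D" "D \<subseteq> cl C" "x \<in> D"
      using ex_circuit_through_mem_cl[OF C] by blast
    then show "x \<in> \<Union>{D. circuit E I D \<and> D \<subseteq> cl C}" by blast
  qed
  ultimately show ?thesis unfolding cyclic_flat_def by blast
qed

lemma free_separator_iff_circuits_span:
  "free_separator E I A \<longleftrightarrow> A \<subseteq> E \<and> (\<forall>C. circuit E I C \<and> \<not> C \<subseteq> A \<longrightarrow> A \<subseteq> cl C)"
proof
  assume A: "free_separator E I A"
  have "A \<subseteq> cl C" if C: "circuit E I C" "\<not> C \<subseteq> A" for C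
  proof -
    have "C \<subseteq> cl C" using C(1) subset_cl unfolding circuit_def by blast
    then have "\<not> cl C \<subseteq> A" using C(2) by blast
    then show ?thesis using A cyclic_flat_cl_circuit[OF C(1)] unfolding free_separator_def by blast
  qed
  then show "A \<subseteq> E \<and> (\<forall>C. circuit E I C \<and> \<not> C \<subseteq> A \<longrightarrow> A \<subseteq> cl C)"
    using A unfolding free_separator_def by blast
next
  assume A: "A \<subseteq> E \<and> (\<forall>C. circuit E I C \<and> \<not> C \<subseteq> A \<longrightarrow> A \<subseteq> cl C)"
  have "A \<subseteq> F" if F: "cyclic_flat E I F" "\<not> F \<subseteq> A" for F
  proof -
    obtain x where x: "x \<in> F" "x \<notin> A" using F(2) by blast
    then obtain C where C: "circuit E I C" "C \<subseteq> F" "x \<in> C"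
      using F(1) unfolding cyclic_flat_def by blast
    then have "A \<subseteq> cl C" using A x(2) by blast
    also have "\<dots> \<subseteq> F" using F(1) C(2) cl_subset_flat unfolding cyclic_flat_def by blast
    finally show ?thesis .
  qed
  then show "free_separator E I A" using A unfolding free_separator_def by blast
qed

subsection \<open>Minors\<close>

lemma rk_restr: "B \<subseteq> S \<Longrightarrow> rk (restr I S) B = rk I B"
  by (rule obtain_basis[of B], rule rk_eqI) (auto simp: restr_def card_le_rk)

lemma rk_contr:
  assumes "Y \<subseteq> T"
  shows "rk (contr I S T) Y + rk I S = rk I (Y \<union> S)"
proof -
  obtain B where B: "B \<subseteq> S" "I B" "card B = rk I S" by (rule obtain_basis)
  have BYS: "B \<subseteq> Y \<union> S" using B(1) by blast
  obtain K where K: "B \<subseteq> K" "K \<subseteq> Y \<union> S" "I K" "card K = rk I (Y \<union> S)"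
    using indep_extend_to_basis[OF B(2) BYS] by blast
  have "card (K \<inter> S) \<le> card B"
    using B K indep_subset[OF K(3)] card_le_rk[of "K \<inter> S" S] by auto
  then have KS: "K \<inter> S = B"
    using B(1) K(1) indep_finite[OF K(3)] by (metis card_seteq finite_Int le_inf_iff order_refl)
  define X where "X = K - B"
  have XY: "X \<subseteq> Y" using K(2) KS unfolding X_def by blast
  have cX: "card X + card B = card K"
    using K(1) indep_finite[OF K(3)] unfolding X_def
    by (metis add.commute card_Diff_subset finite_subset le_add_diff_inverse card_mono)
  have rX: "rk I (X \<union> S) = card X + rk I S"
  proof (rule antisym)
    have "rk I (X \<union> S) \<le> rk I (Y \<union> S)" using XY by (intro rk_mono) auto
    then show "rk I (X \<union> S) \<le> card X + rk I S" using K cX B by simp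
    have "card K \<le> rk I (X \<union> S)" using K KS by (intro card_le_rk) (auto simp: X_def)
    then show "card X + rk I S \<le> rk I (X \<union> S)" using cX B by simp
  qed
  have "rk (contr I S T) Y = rk I (Y \<union> S) - rk I S"
  proof (rule rk_eqI[of Y _ _ X])
    fix Z assume Z: "Z \<subseteq> Y" "contr I S T Z"
    then have "rk I (Z \<union> S) \<le> rk I (Y \<union> S)" by (intro rk_mono) auto
    then show "card Z \<le> rk I (Y \<union> S) - rk I S" using Z unfolding contr_def by simp
  qed (use XY assms rX cX K B in \<open>auto simp: contr_def\<close>)
  moreover have "rk I S \<le> rk I (Y \<union> S)" by (intro rk_mono) auto
  ultimately show ?thesis by simp
qed

end

subsection \<open>The free product of a restriction and a contraction\<close>

locale matroid_split = finite_matroid "S \<union> T" L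
  for S T :: "'a set" and L :: "'a set \<Rightarrow> bool" +
  assumes disjoint: "S \<inter> T = {}"
begin

abbreviation split_product :: "'a set \<Rightarrow> bool" where
  "split_product \<equiv> free_product S (restr L S) T (contr L S T)"

lemma split_product_iff:
  "split_product A \<longleftrightarrow> A \<subseteq> S \<union> T \<and> L (A \<inter> S) \<and> card A \<le> rk L (S \<union> (A \<inter> T))"
proof (cases "A \<subseteq> S \<union> T \<and> L (A \<inter> S)")
  case False
  then show ?thesis unfolding free_product_def restr_def by auto
next
  case True
  have "finite A" using True finite_ground finite_subset by blast
  have "card A = card ((A \<inter> S) \<union> (A \<inter> T))" using True by (simp add: Int_absorb2 flip: Int_Un_distrib)
  also have "\<dots> = card (A \<inter> S) + card (A \<inter> T)"
    using \<open>finite A\<close> disjoint by (intro card_Un_disjoint) auto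
  finally have "card A = card (A \<inter> S) + card (A \<inter> T)" .
  moreover have "rk (restr L S) S = rk L S" "rk (restr L S) (A \<inter> S) = card (A \<inter> S)"
    using rk_restr[of "A \<inter> S"] rk_restr[of S] rk_indep True by auto
  moreover have "rk (contr L S T) (A \<inter> T) + rk L S = rk L (S \<union> (A \<inter> T))"
    using rk_contr[of "A \<inter> T"] by (simp add: Un_commute)
  ultimately show ?thesis
    using True unfolding free_product_def restr_def by auto
qed

lemma split_product_if_indep:
  assumes "L A"
  shows "split_product A"
proof -
  have "A \<subseteq> S \<union> (A \<inter> T)" using indep_subset_ground[OF assms] by blast
  then have "card A \<le> rk L (S \<union> (A \<inter> T))" using rk_mono rk_indep[OF assms] by metis
  then show ?thesis
    using split_product_iff indep_subset_ground[OF assms] indep_subset[OF assms] by blast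
qed

lemma circuit_spans_if_eq_split_product:
  assumes eq: "L = split_product" and C: "circuit (S \<union> T) L C" "\<not> C \<subseteq> S"
  shows "S \<subseteq> cl C"
proof
  fix s assume s: "s \<in> S"
  have C_ground: "C \<subseteq> S \<union> T" and "\<not> L C" and C_min: "\<And>D. D \<subset> C \<Longrightarrow> L D"
    using C(1) unfolding circuit_def by auto
  show "s \<in> cl C"
  proof (rule ccontr)
    assume "s \<notin> cl C"
    then have "rk L C < rk L (insert s C)" using s by (intro rk_less_if_notin_cl) auto
    then have "card C \<le> rk L (insert s C)" using rk_circuit[OF C(1)] by simp
    also have "\<dots> \<le> rk L (S \<union> (C \<inter> T))"
      using C_ground s by (intro rk_mono) auto
    moreover have "L (C \<inter> S)" using C(2) C_min by blast
    ultimately have "split_product C" using C_ground by (simp add: split_product_iff)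
    then have "L C" by (rule iffD2[OF fun_cong[OF eq]])
    with \<open>\<not> L C\<close> show False ..
  qed
qed

lemma eq_split_product_if_circuits_span:
  assumes span: "\<And>C. circuit (S \<union> T) L C \<Longrightarrow> \<not> C \<subseteq> S \<Longrightarrow> S \<subseteq> cl C"
  shows "L = split_product"
proof (intro ext iffI)
  fix A assume "split_product A"
  then have A: "A \<subseteq> S \<union> T" "L (A \<inter> S)" "card A \<le> rk L (S \<union> (A \<inter> T))"
    by (simp_all add: split_product_iff)
  have "finite A" using A(1) finite_ground finite_subset by blast
  show "L A"
  proof (rule ccontr)
    assume "\<not> L A"
    then obtain C where C: "C \<subseteq> A" "circuit (S \<union> T) L C"
      using dependent_contains_circuit[OF A(1)] by blast
    have "\<not> C \<subseteq> S"
    proof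
      assume "C \<subseteq> S"
      then have "L C" using C(1) A(2) indep_subset by blast
      then show False using C(2) unfolding circuit_def by blast
    qed
    then have rk_CS: "rk L (C \<union> S) = rk L C" by (rule rk_Un_cl[OF span[OF C(2)]])
    have "rk L (S \<union> (A \<inter> T)) \<le> rk L ((C \<union> S) \<union> (A \<inter> T - C))" by (intro rk_mono) blast
    also have "\<dots> \<le> rk L C + card (A \<inter> T - C)"
      using rk_Un_le[of "A \<inter> T - C" "C \<union> S"] \<open>finite A\<close> rk_CS by simp
    also have "\<dots> < card C + card (A \<inter> T - C)"
      using rk_circuit[OF C(2)] by simp
    also have "\<dots> = card (C \<union> (A \<inter> T - C))"
      using \<open>finite A\<close> C(1) by (intro card_Un_disjoint[symmetric]) (auto intro: finite_subset)
    also have "\<dots> \<le> card A" using \<open>finite A\<close> C(1) by (intro card_mono) auto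
    finally show False using A(3) by simp
  qed
qed (rule split_product_if_indep)

end

theorem theorem6p3:
  fixes S T :: "'a set" and L :: "'a set \<Rightarrow> bool"
  assumes "matroid (S \<union> T) L" and "S \<inter> T = {}"
  shows "L = free_product S (restr L S) T (contr L S T) \<longleftrightarrow> free_separator (S \<union> T) L S"
proof -
  interpret matroid_split S T L
    using assms by (intro matroid_split.intro finite_matroid.intro matroid_split_axioms.intro)
  show ?thesis
    unfolding free_separator_iff_circuits_span
    using circuit_spans_if_eq_split_product eq_split_product_if_circuits_span by blast
qed

end
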